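(* Let $N$ be the Newton map $z-F(z)/F'(z)$ of a transcendental entire function $F$, and suppose $N$ belongs to the class $\mathbf{R}_1$ and has exactly one pole in the strip $S_0=\{z:-\frac12<\operatorname{Re}z\le\frac12\}$, which is simple. Then $N$ is conjugate to either (i) the Newton map of $F_{\alpha,m}(z)=(e^{\alpha z}\sin\pi z)^m$ for some $\alpha\in\mathbb{C}\setminus\{\pm\pi i\}$ and $m\in\mathbb{N}^*$; or (ii) the Newton map of $F_\beta(z)=\exp\!\big(-\frac z\beta-\frac{1}{2\pi i\beta}e^{2\pi iz}\big)$ for some $\beta\in\mathbb{C}^*$.
   Context: $\mathbf{R}_1$ is the class of meromorphic functions $z+R(e^{2\pi iz})$ with $R$ a non-constant rational map with $R(0)\neq\infty$, $R(\infty)\neq\infty$ and $R^{-1}(\infty)\neq\emptyset$. *)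

theory Defs
  imports "HOL-Complex_Analysis.Complex_Analysis" "HOL-Computational_Algebra.Polynomial_Factorial"
begin

definition transcendental_entire :: "(complex \<Rightarrow> complex) \<Rightarrow> bool" where
  "transcendental_entire F \<longleftrightarrow> F holomorphic_on UNIV \<and> \<not> (\<exists>p. \<forall>z. F z = poly p z)"

text \<open>Newton map of F (as a function; meaningful as a meromorphic function
  away from the discrete zero set of the derivative).\<close>
definition newton_map :: "(complex \<Rightarrow> complex) \<Rightarrow> complex \<Rightarrow> complex" where
  "newton_map F = (\<lambda>z. z - F z / deriv F z)"

text \<open>Class R_1: N(z) = z + R(exp(2 pi i z)) with R = p/q a rational map in lowest terms,
  non-constant, R(0) finite, R(infinity) finite, and R has a pole in the finite plane.
  Equality of meromorphic functions is expressed as equality outside a discrete set.\<close>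
definition class_R1 :: "(complex \<Rightarrow> complex) \<Rightarrow> bool" where
  "class_R1 N \<longleftrightarrow> (\<exists>p q :: complex poly.
      q \<noteq> 0 \<and> coprime p q \<and>
      \<not> (\<exists>c. \<forall>w. poly q w \<noteq> 0 \<longrightarrow> poly p w = c * poly q w) \<and>
      poly q 0 \<noteq> 0 \<and>
      degree p \<le> degree q \<and>
      (\<exists>w. poly q w = 0) \<and>
      (\<forall>\<^sub>\<approx>z. N z = z + poly p (exp (2 * pi * \<i> * z)) / poly q (exp (2 * pi * \<i> * z))))"

definition strip_S0 :: "complex set" where
  "strip_S0 = {z. - 1/2 < Re z \<and> Re z \<le> 1/2}"

text \<open>Conformal conjugacy of meromorphic functions on C, i.e. by an affine automorphism
  phi(z) = a z + b, with equality of meromorphic functions (outside a discrete set).\<close>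
definition conformally_conjugate :: "(complex \<Rightarrow> complex) \<Rightarrow> (complex \<Rightarrow> complex) \<Rightarrow> bool" where
  "conformally_conjugate N M \<longleftrightarrow>
     (\<exists>a b. a \<noteq> 0 \<and> (\<forall>\<^sub>\<approx>z. N (a * z + b) = a * M z + b))"

definition F_alpha_m :: "complex \<Rightarrow> nat \<Rightarrow> complex \<Rightarrow> complex" where
  "F_alpha_m \<alpha> m = (\<lambda>z. (exp (\<alpha> * z) * sin (of_real pi * z)) ^ m)"

definition F_beta :: "complex \<Rightarrow> complex \<Rightarrow> complex" where
  "F_beta \<beta> = (\<lambda>z. exp (- z / \<beta> - exp (2 * pi * \<i> * z) / (2 * pi * \<i> * \<beta>)))"

end

theory Submission
  imports Defs "HOL-Computational_Algebra.Fundamental_Theorem_Algebra"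
begin

(* Write N(z) = z + R(exp(2 pi i z)) with R = p/q in lowest terms. Over every root w of q the map N
   has poles whose order is the multiplicity of w, and exactly one of them lies in S_0. So q has a
   single root w0, which is simple, and as deg p <= deg q, R is the Moebius map
   w -> (a + b w) / (w - w0).
   If b = 0 (resp. a = 0), the translation (resp. the reflection z -> t - z) through a point t over
   -w0 conjugates N to the Newton map of F_beta. Otherwise the points z1 over w1 = -a/b are fixed
   points of N, hence zeros of F. There (z - z1) F'/F tends to the multiplicity m of the zero, while
   F/F' = z - N(z) computes the same limit explicitly; this yields 2 pi i a b m = -(a + b w0), which
   is exactly the relation making the translation by z1 conjugate N to the Newton map of
   F_alpha_m for alpha = -1/(m b) - pi i. *)

section \<open>Orders of zeros\<close>

lemma analytic_on_poly [analytic_intros]: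
  assumes "f analytic_on A"
  shows "(\<lambda>z. poly p (f z)) analytic_on A"
  unfolding poly_altdef by (intro analytic_intros assms)

lemma poly_order_factorization:
  fixes q :: "'a::idom poly"
  assumes "q \<noteq> 0"
  obtains r where "poly r w0 \<noteq> 0" "\<And>w. poly q w = poly r w * (w - w0) ^ order w0 q"
proof -
  define k where "k = order w0 q"
  obtain r where q: "q = [:-w0, 1:] ^ k * r" and "\<not> [:-w0, 1:] dvd r"
    using order_decomp[OF assms, where a = w0, folded k_def] by blast
  then have "poly r w0 \<noteq> 0"
    by (simp add: poly_eq_0_iff_dvd)
  moreover have "poly q w = poly r w * (w - w0) ^ k" for w
    by (simp add: q poly_power mult.commute)
  ultimately show ?thesis
    using that unfolding k_def by blast
qed

lemma zorder_poly:
  fixes q :: "complex poly"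
  assumes "q \<noteq> 0"
  shows "zorder (poly q) w0 = int (order w0 q)"
proof -
  obtain r where "poly r w0 \<noteq> 0" "\<And>w. poly q w = poly r w * (w - w0) ^ order w0 q"
    using poly_order_factorization[OF assms] by blast
  then show ?thesis
    using poly_holomorphic_on[OF holomorphic_on_ident]
    by (intro zorder_eqI[of UNIV _ "poly r"]) auto
qed

lemma eventually_poly_nonzero_at:
  fixes q :: "complex poly"
  assumes "q \<noteq> 0"
  shows "\<forall>\<^sub>F w in at w0. poly q w \<noteq> 0"
proof -
  obtain r where r: "poly r w0 \<noteq> 0" "\<And>w. poly q w = poly r w * (w - w0) ^ order w0 q"
    using poly_order_factorization[OF assms] by blast
  have "\<forall>\<^sub>F w in at w0. poly r w \<noteq> 0"
    using r(1) analytic_on_poly[OF analytic_on_ident]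
    by (intro analytic_at_neq_imp_eventually_neq) auto
  moreover have "\<forall>\<^sub>F w in at w0. w \<noteq> w0"
    by (rule eventually_neq_at_within)
  ultimately show ?thesis
    by eventually_elim (simp add: r(2))
qed

lemma poly_eq_smult_power_if_unique_root:
  fixes q :: "complex poly"
  assumes "q \<noteq> 0" and unique: "\<And>w. poly q w = 0 \<Longrightarrow> w = w0"
  obtains c where "c \<noteq> 0" "q = smult c ([:-w0, 1:] ^ order w0 q)"
proof -
  define k where "k = order w0 q"
  obtain r where q: "q = [:-w0, 1:] ^ k * r" and r: "\<not> [:-w0, 1:] dvd r"
    using order_decomp[OF assms(1), where a = w0, folded k_def] by blast
  have "poly r w \<noteq> 0" for w
  proof
    assume "poly r w = 0"
    then have "poly q w = 0"
      by (simp add: q)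
    then show False
      using unique r \<open>poly r w = 0\<close> by (auto simp: poly_eq_0_iff_dvd)
  qed
  then have "constant (poly r)"
    using fundamental_theorem_of_algebra by blast
  then have "degree r = 0"
    by (simp add: constant_degree)
  then obtain c where "r = [:c:]"
    by (rule degree_eq_zeroE)
  with q have "q = smult c ([:-w0, 1:] ^ k)"
    by simp
  moreover from this assms(1) have "c \<noteq> 0"
    by auto
  ultimately show ?thesis
    using that unfolding k_def by blast
qed

lemma tendsto_logderiv_zorder:
  fixes f :: "complex \<Rightarrow> complex"
  assumes "f holomorphic_on S" "open S" "connected S" "z0 \<in> S" "\<exists>w\<in>S. f w \<noteq> 0"
  shows "((\<lambda>z. (z - z0) * deriv f z / f z) \<longlongrightarrow> of_int (zorder f z0)) (at z0)"
proof -
  define n g where "n = nat (zorder f z0)" and "g = zor_poly f z0"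
  have n: "of_nat n = (of_int (zorder f z0) :: complex)"
    using zorder_exist_zero[OF assms] unfolding n_def by (auto split: if_splits)
  obtain r where "r > 0" and g: "g holomorphic_on cball z0 r"
    and fg: "\<And>w. w \<in> cball z0 r \<Longrightarrow> f w = g w * (w - z0) ^ n \<and> g w \<noteq> 0"
    using zorder_exist_zero[OF assms] unfolding n_def g_def by blast
  have g_ball: "g holomorphic_on ball z0 r"
    using g by (rule holomorphic_on_subset) auto
  have logderiv: "(w - z0) * deriv f w / f w = (w - z0) * deriv g w / g w + of_nat n"
    if w: "w \<in> ball z0 r" "w \<noteq> z0" for w
  proof -
    have "((\<lambda>w. g w * (w - z0) ^ n) has_field_derivative
        deriv g w * (w - z0) ^ n + g w * (of_nat n * (w - z0) ^ (n - 1))) (at w)"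
      using holomorphic_derivI[OF g_ball open_ball w(1)] by (auto intro!: derivative_eq_intros)
    then have "(f has_field_derivative
        deriv g w * (w - z0) ^ n + g w * (of_nat n * (w - z0) ^ (n - 1))) (at w)"
      by (rule has_field_derivative_transform_within_open[OF _ open_ball w(1)]) (use fg in auto)
    then have "deriv f w = deriv g w * (w - z0) ^ n + g w * (of_nat n * (w - z0) ^ (n - 1))"
      by (rule DERIV_imp_deriv)
    moreover have "f w = g w * (w - z0) ^ n" "g w \<noteq> 0"
      using fg w(1) by auto
    ultimately show ?thesis
      using w(2) by (simp only:) (cases n, simp_all add: field_simps)
  qed
  have "\<forall>\<^sub>F w in at z0. (w - z0) * deriv g w / g w + of_nat n = (w - z0) * deriv f w / f w"
    using eventually_at_ball'[OF \<open>r > 0\<close>, of z0 UNIV] by eventually_elim (simp add: logderiv)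
  moreover have "isCont g z0" "isCont (deriv g) z0"
    using holomorphic_on_imp_continuous_on[OF g_ball]
      holomorphic_on_imp_continuous_on[OF holomorphic_deriv[OF g_ball open_ball]] \<open>r > 0\<close>
    by (simp_all add: continuous_on_eq_continuous_at)
  then have "isCont (\<lambda>w. (w - z0) * deriv g w / g w + of_nat n) z0"
    using \<open>r > 0\<close> fg[of z0] by (intro continuous_intros) auto
  ultimately show ?thesis
    unfolding n[symmetric] isCont_def by (auto intro: tendsto_cong[THEN iffD1])
qed

section \<open>The covering map exp_2pii\<close>

abbreviation exp_2pii :: "complex \<Rightarrow> complex" where
  "exp_2pii z \<equiv> exp (2 * pi * \<i> * z)"

lemma exp_2pii_add: "exp_2pii (z + t) = exp_2pii z * exp_2pii t"
  by (simp add: distrib_left exp_add)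

lemma exp_2pii_minus_add: "exp_2pii (- z + t) = exp_2pii t / exp_2pii z"
  using exp_2pii_add[of "- z + t" z] by (simp add: eq_divide_eq)

lemma exp_2pii_Ln:
  assumes "w \<noteq> 0"
  shows "exp_2pii (Ln w / (2 * pi * \<i>)) = w"
  using assms by simp

lemma Ln_div_2pii_in_strip_S0:
  assumes "w \<noteq> 0"
  shows "Ln w / (2 * pi * \<i>) \<in> strip_S0"
proof -
  have "Re (Ln w / (2 * pi * \<i>)) = Im (Ln w) / (2 * pi)"
    by (simp add: Re_divide power2_eq_square)
  moreover have "- pi < Im (Ln w)" "Im (Ln w) \<le> pi"
    using assms mpi_less_Im_Ln Im_Ln_le_pi by auto
  ultimately show ?thesis
    unfolding strip_S0_def using pi_gt_zero
    by (simp add: divide_less_eq less_divide_eq divide_le_eq)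
qed

lemma has_field_derivative_exp_2pii:
  "(exp_2pii has_field_derivative 2 * pi * \<i> * exp_2pii z) (at z)"
  by (auto intro!: derivative_eq_intros)

lemma eventually_exp_2pii_neq: "\<forall>\<^sub>F z in at z0. exp_2pii z \<noteq> w"
proof (cases "w = exp_2pii z0")
  case False
  then show ?thesis
    by (intro analytic_at_neq_imp_eventually_neq analytic_intros) auto
next
  case True
  have "exp_2pii z \<noteq> w" if "z \<noteq> z0" "dist z z0 < 1" for z
  proof
    assume "exp_2pii z = w"
    then obtain n :: int where "2 * pi * \<i> * z = 2 * pi * \<i> * z0 + of_int (2 * n) * pi * \<i>"
      using True exp_eq by metis
    then have "(2 * pi * \<i>) * z = (2 * pi * \<i>) * (z0 + of_int n)"
      by (simp add: algebra_simps)
    then have "z = z0 + of_int n"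
      by simp
    with that show False
      by (simp add: dist_norm)
  qed
  then show ?thesis
    unfolding eventually_at by (intro exI[of _ 1]) auto
qed

lemma filterlim_exp_2pii_at: "filterlim exp_2pii (at (exp_2pii z0)) (at z0)"
  by (intro filterlim_atI eventually_exp_2pii_neq) (intro tendsto_intros)

lemma zorder_exp_2pii_minus_const: "zorder (\<lambda>z. exp_2pii z - exp_2pii z0) z0 = 1"
proof (rule zorder_zero_eqI')
  show "(deriv ^^ nat 1) (\<lambda>z. exp_2pii z - exp_2pii z0) z0 \<noteq> 0"
    using DERIV_imp_deriv[OF DERIV_diff[OF has_field_derivative_exp_2pii DERIV_const]]
    by simp
qed (auto intro!: analytic_intros)

lemma tendsto_exp_2pii_difference_quotient:
  "((\<lambda>z. (z - z0) / (exp_2pii z - exp_2pii z0)) \<longlongrightarrow> 1 / (2 * pi * \<i> * exp_2pii z0)) (at z0)"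
proof -
  have "((\<lambda>z. (exp_2pii z - exp_2pii z0) / (z - z0)) \<longlongrightarrow> 2 * pi * \<i> * exp_2pii z0) (at z0)"
    using has_field_derivative_exp_2pii by (simp add: has_field_derivative_iff)
  then have "((\<lambda>z. inverse ((exp_2pii z - exp_2pii z0) / (z - z0)))
      \<longlongrightarrow> inverse (2 * pi * \<i> * exp_2pii z0)) (at z0)"
    by (rule tendsto_inverse) simp
  then show ?thesis
    by (simp add: inverse_eq_divide)
qed

section \<open>Maps of class R1 with a unique simple pole in the strip S0\<close>

lemma eventually_poly_exp_2pii_nonzero:
  fixes q :: "complex poly"
  assumes "q \<noteq> 0"
  shows "\<forall>\<^sub>F z in at z0. poly q (exp_2pii z) \<noteq> 0"
  using eventually_compose_filterlim[OF eventually_poly_nonzero_at[OF assms] filterlim_exp_2pii_at] .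

lemma zorder_poly_exp_2pii:
  fixes q :: "complex poly"
  assumes "q \<noteq> 0"
  shows "zorder (\<lambda>z. poly q (exp_2pii z)) z0 = int (order (exp_2pii z0) q)"
proof -
  have "zorder (poly q \<circ> exp_2pii) z0
      = zorder (poly q) (exp_2pii z0) * zorder (\<lambda>z. exp_2pii z - exp_2pii z0) z0"
    using assms
    by (intro zorder_compose' isolated_singularity_at_analytic not_essential_analytic
        analytic_intros eventually_poly_nonzero_at eventually_exp_2pii_neq)
  then show ?thesis
    unfolding o_def zorder_poly[OF assms] zorder_exp_2pii_minus_const by simp
qed

lemma is_pole_R1_map:
  fixes p q :: "complex poly"
  assumes "q \<noteq> 0" "poly q (exp_2pii z0) = 0" "poly p (exp_2pii z0) \<noteq> 0"
  shows "is_pole (\<lambda>z. z + poly p (exp_2pii z) / poly q (exp_2pii z)) z0"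
proof -
  have "((\<lambda>z. poly q (exp_2pii z)) \<longlongrightarrow> poly q (exp_2pii z0)) (at z0)"
    by (intro tendsto_intros)
  then have "((\<lambda>z. poly q (exp_2pii z)) \<longlongrightarrow> 0) (at z0)"
    using assms(2) by simp
  then have "filterlim (\<lambda>z. poly q (exp_2pii z)) (at 0) (at z0)"
    using eventually_poly_exp_2pii_nonzero[OF assms(1)] by (rule filterlim_atI)
  then have "is_pole (\<lambda>z. poly p (exp_2pii z) / poly q (exp_2pii z)) z0"
    using assms(3) by (intro is_pole_divide) (auto intro!: continuous_intros)
  then show ?thesis
    unfolding is_pole_def by (rule tendsto_add_filterlim_at_infinity[OF tendsto_ident_at])
qed

lemma zorder_R1_map:
  fixes p q :: "complex poly"
  assumes "q \<noteq> 0" "poly q (exp_2pii z0) = 0" "poly p (exp_2pii z0) \<noteq> 0"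
  shows "zorder (\<lambda>z. z + poly p (exp_2pii z) / poly q (exp_2pii z)) z0
           = - int (order (exp_2pii z0) q)"
proof -
  have ev_q: "\<forall>\<^sub>F z in at z0. poly q (exp_2pii z) \<noteq> 0"
    using eventually_poly_exp_2pii_nonzero[OF assms(1)] .
  have ev_p: "\<forall>\<^sub>F z in at z0. poly p (exp_2pii z) \<noteq> 0"
    using assms(3) by (intro analytic_at_neq_imp_eventually_neq analytic_intros)
  have zq: "zorder (\<lambda>z. poly q (exp_2pii z)) z0 = int (order (exp_2pii z0) q)"
    using assms(1) by (rule zorder_poly_exp_2pii)
  have zp: "zorder (\<lambda>z. poly p (exp_2pii z)) z0 = 0"
    using assms(3) by (intro zorder_eq_0I analytic_intros)
  have mero: "(\<lambda>z. poly f (exp_2pii z)) meromorphic_on {z0}" for f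
    by (intro analytic_on_imp_meromorphic_on analytic_intros)
  have zpq: "zorder (\<lambda>z. poly p (exp_2pii z) / poly q (exp_2pii z)) z0
      = - int (order (exp_2pii z0) q)"
  proof -
    have "zorder (\<lambda>z. poly p (exp_2pii z) / poly q (exp_2pii z)) z0
        = zorder (\<lambda>z. poly p (exp_2pii z)) z0 - zorder (\<lambda>z. poly q (exp_2pii z)) z0"
      by (intro Meromorphic.zorder_divide mero eventually_frequently ev_p ev_q) simp_all
    then show ?thesis
      unfolding zp zq by simp
  qed
  have "zorder (\<lambda>z. z) z0 \<ge> 0"
    by (intro zorder_ge_0 analytic_intros eventually_frequently eventually_neq_at_within) simp
  moreover have "order (exp_2pii z0) q > 0"
    using assms(1,2) order_root by blast
  ultimately have lt: "zorder (\<lambda>z. poly p (exp_2pii z) / poly q (exp_2pii z)) z0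
      < zorder (\<lambda>z. z) z0"
    unfolding zpq by linarith
  have fr_id: "\<exists>\<^sub>F z in at z0. z \<noteq> 0"
    by (intro eventually_frequently eventually_neq_at_within) simp
  have fr_pq: "\<exists>\<^sub>F z in at z0. poly p (exp_2pii z) / poly q (exp_2pii z) \<noteq> 0"
    using ev_p ev_q by (intro eventually_frequently) (auto elim: eventually_elim2)
  have "zorder (\<lambda>z. z + poly p (exp_2pii z) / poly q (exp_2pii z)) z0
      = zorder (\<lambda>z. poly p (exp_2pii z) / poly q (exp_2pii z)) z0"
    using zorder_add2[OF meromorphic_on_id fr_id meromorphic_on_divide[OF mero[of p] mero[of q]] fr_pq lt] .
  also note zpq
  finally show ?thesis .
qed

lemma R1_map_pole_over_root:
  fixes p q :: "complex poly"
  assumes N: "\<forall>\<^sub>\<approx>z. N z = z + poly p (exp_2pii z) / poly q (exp_2pii z)"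
    and "q \<noteq> 0" "coprime p q" "poly q w = 0" "exp_2pii z0 = w"
  shows "is_pole N z0" and "zorder N z0 = - int (order w q)"
proof -
  have q: "poly q (exp_2pii z0) = 0" and p: "poly p (exp_2pii z0) \<noteq> 0"
    unfolding assms(5) using assms(4) coprime_poly_0[OF assms(3)] by blast+
  have ev: "\<forall>\<^sub>F z in at z0. N z = z + poly p (exp_2pii z) / poly q (exp_2pii z)"
    using eventually_cosparse_imp_eventually_at[OF N UNIV_I] .
  show "is_pole N z0"
    using is_pole_R1_map[OF assms(2) q p] is_pole_cong[OF ev refl] by blast
  show "zorder N z0 = - int (order w q)"
    using zorder_R1_map[OF assms(2) q p] zorder_cong[OF ev refl] unfolding assms(5) by simp
qed

lemma poly_eq_linear_if_degree_le_1:
  fixes p :: "'a::comm_semiring_1 poly"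
  assumes "degree p \<le> 1"
  shows "poly p x = coeff p 0 + coeff p 1 * x"
  using assms by (auto simp: poly_altdef le_Suc_eq coeff_eq_0 mult.commute)

definition R1_mobius_map :: "complex \<Rightarrow> complex \<Rightarrow> complex \<Rightarrow> complex \<Rightarrow> complex" where
  "R1_mobius_map a b w0 z = z + (a + b * exp_2pii z) / (exp_2pii z - w0)"

lemma class_R1_unique_simple_pole_normal_form:
  assumes R1: "class_R1 N"
    and unique: "\<exists>!z0. z0 \<in> strip_S0 \<and> is_pole N z0"
    and simple: "\<forall>z0\<in>strip_S0. is_pole N z0 \<longrightarrow> zorder N z0 = -1"
  obtains a b w0 where "w0 \<noteq> 0" "a + b * w0 \<noteq> 0" "\<forall>\<^sub>\<approx>z. N z = R1_mobius_map a b w0 z"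
proof -
  obtain p q :: "complex poly" where q: "q \<noteq> 0" "coprime p q" "poly q 0 \<noteq> 0"
    "degree p \<le> degree q" "\<exists>w. poly q w = 0"
    and N: "\<forall>\<^sub>\<approx>z. N z = z + poly p (exp_2pii z) / poly q (exp_2pii z)"
    using R1 unfolding class_R1_def by blast
  define lift where "lift w = Ln w / (2 * pi * \<i>)" for w
  have lift: "lift w \<in> strip_S0" "exp_2pii (lift w) = w" if "poly q w = 0" for w
    using that q(3) unfolding lift_def by (metis Ln_div_2pii_in_strip_S0 exp_2pii_Ln)+
  have pole: "is_pole N (lift w)" "zorder N (lift w) = - int (order w q)" if "poly q w = 0" for w
    using R1_map_pole_over_root[OF N q(1,2) that lift(2)[OF that]] by blast+
  obtain w0 where w0: "poly q w0 = 0"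
    using q(5) by blast
  have single_root: "w = w0" if "poly q w = 0" for w
    using unique lift[OF that] lift[OF w0] pole[OF that] pole[OF w0] by metis
  have "order w0 q = 1"
    using simple lift[OF w0] pole[OF w0] by simp
  then obtain c where "c \<noteq> 0" and "q = smult c [:-w0, 1:]"
    using poly_eq_smult_power_if_unique_root[OF q(1) single_root] by (metis power_one_right)
  then have poly_q: "poly q w = c * (w - w0)" and "degree q = 1" for w
    by (simp_all add: algebra_simps)
  define a b where "a = coeff p 0 / c" and "b = coeff p 1 / c"
  have poly_p: "poly p w = c * (a + b * w)" for w
    using poly_eq_linear_if_degree_le_1[of p w] q(4) \<open>degree q = 1\<close> \<open>c \<noteq> 0\<close>
    by (simp add: a_def b_def algebra_simps)
  show ?thesis
  proof
    show "w0 \<noteq> 0"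
      using w0 q(3) by auto
    show "a + b * w0 \<noteq> 0"
      using coprime_poly_0[OF q(2), of w0] w0 poly_p by simp
    show "\<forall>\<^sub>\<approx>z. N z = R1_mobius_map a b w0 z"
      using N by eventually_elim (simp add: R1_mobius_map_def poly_p poly_q \<open>c \<noteq> 0\<close>)
  qed
qed

section \<open>Newton maps of the model functions\<close>

lemma newton_map_F_beta:
  assumes "\<beta> \<noteq> 0"
  shows "newton_map (F_beta \<beta>) z = z + \<beta> / (1 + exp_2pii z)"
proof -
  have "(F_beta \<beta> has_field_derivative - F_beta \<beta> z * (1 + exp_2pii z) / \<beta>) (at z)"
    unfolding F_beta_def using assms by (auto intro!: derivative_eq_intros simp: field_simps)
  then have d: "deriv (F_beta \<beta>) z = - F_beta \<beta> z * (1 + exp_2pii z) / \<beta>"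
    by (rule DERIV_imp_deriv)
  have "F_beta \<beta> z \<noteq> 0"
    by (simp add: F_beta_def)
  then have "deriv (F_beta \<beta>) z / F_beta \<beta> z = - (1 + exp_2pii z) / \<beta>"
    unfolding d using assms by (simp add: field_simps)
  then have "F_beta \<beta> z / deriv (F_beta \<beta>) z = - \<beta> / (1 + exp_2pii z)"
    by (metis inverse_divide minus_divide_left minus_divide_right)
  then show ?thesis
    unfolding newton_map_def by simp
qed

lemma newton_map_F_alpha_m_sin_cos:
  fixes \<alpha> z :: complex
  assumes "m \<ge> 1"
  shows "newton_map (F_alpha_m \<alpha> m) z
    = z - sin (pi * z) / (of_nat m * (\<alpha> * sin (pi * z) + pi * cos (pi * z)))"
proof -
  define s c e where "s = sin (pi * z)" and "c = cos (pi * z)" and "e = exp (\<alpha> * z)"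
  have du: "((\<lambda>z. exp (\<alpha> * z) * sin (pi * z)) has_field_derivative e * (\<alpha> * s + pi * c)) (at z)"
    unfolding s_def c_def e_def by (auto intro!: derivative_eq_intros simp: algebra_simps)
  then have "(F_alpha_m \<alpha> m has_field_derivative
      of_nat m * (e * s) ^ (m - 1) * (e * (\<alpha> * s + pi * c))) (at z)"
    unfolding F_alpha_m_def using DERIV_power[OF du, of m] by (simp add: s_def e_def mult_ac)
  then have d: "deriv (F_alpha_m \<alpha> m) z = of_nat m * (e * s) ^ (m - 1) * (e * (\<alpha> * s + pi * c))"
    by (rule DERIV_imp_deriv)
  have F: "F_alpha_m \<alpha> m z = (e * s) ^ (m - 1) * (e * s)"
    using assms by (cases m) (simp_all add: F_alpha_m_def s_def e_def mult.commute)
  have "e \<noteq> 0"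
    by (simp add: e_def)
  have "F_alpha_m \<alpha> m z / deriv (F_alpha_m \<alpha> m) z = s / (of_nat m * (\<alpha> * s + pi * c))"
  proof (cases "s = 0 \<or> \<alpha> * s + pi * c = 0")
    case True
    \<comment> \<open>both sides are 0, thanks to x / 0 = 0; so the identity holds at every z\<close>
    then show ?thesis
      unfolding F d by auto
  next
    case False
    then have "(e * s) ^ (m - 1) \<noteq> 0"
      using \<open>e \<noteq> 0\<close> by simp
    then have "F_alpha_m \<alpha> m z / deriv (F_alpha_m \<alpha> m) z
        = (e * s) / (of_nat m * (e * (\<alpha> * s + pi * c)))"
      unfolding F d by (simp add: mult.assoc)
    then show ?thesis
      using \<open>e \<noteq> 0\<close> by simp
  qed
  then show ?thesis
    unfolding newton_map_def s_def c_def by simp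
qed

lemma newton_map_F_alpha_m:
  fixes \<alpha> z :: complex
  assumes "m \<ge> 1"
  shows "newton_map (F_alpha_m \<alpha> m) z
    = z - (exp_2pii z - 1) / (of_nat m * ((\<alpha> + pi * \<i>) * exp_2pii z + (pi * \<i> - \<alpha>)))"
proof -
  define s c u where "s = sin (pi * z)" and "c = cos (pi * z)" and "u = exp (\<i> * (pi * z))"
  have "u \<noteq> 0"
    by (simp add: u_def)
  have s_u: "s = (u\<^sup>2 - 1) / (2 * \<i> * u)" and c_u: "c = (u\<^sup>2 + 1) / (2 * u)"
    unfolding s_def c_def u_def sin_exp_eq cos_exp_eq
    by (simp_all add: exp_minus field_simps power2_eq_square exp_add[symmetric])
  have E_u: "exp_2pii z = u\<^sup>2"
    unfolding u_def by (simp add: exp_double[symmetric] mult_ac)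
  define D where "D = of_nat m * ((\<alpha> + pi * \<i>) * u\<^sup>2 + (pi * \<i> - \<alpha>))"
  have den: "of_nat m * (\<alpha> * s + pi * c) = D / (2 * \<i> * u)"
    unfolding s_u c_u D_def using \<open>u \<noteq> 0\<close> by (simp add: field_simps power2_eq_square)
  have "s / (of_nat m * (\<alpha> * s + pi * c)) = ((u\<^sup>2 - 1) / (2 * \<i> * u)) / (D / (2 * \<i> * u))"
    unfolding den by (simp only: s_u)
  also have "\<dots> = (u\<^sup>2 - 1) / D"
    using \<open>u \<noteq> 0\<close> by (cases "D = 0") (simp_all add: field_simps)
  finally show ?thesis
    unfolding newton_map_F_alpha_m_sin_cos[OF assms] D_def E_u s_def c_def by simp
qed

section \<open>Conjugacy to the models\<close>

lemma eventually_cosparse_compose: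
  assumes "\<And>x. filterlim g (at (g x)) (at x)" "\<forall>\<^sub>\<approx>y. P y"
  shows "\<forall>\<^sub>\<approx>x. P (g x)"
  using assms eventually_compose_filterlim by (simp add: eventually_cosparse_open_eq) blast

lemma filterlim_affine_at:
  fixes a b :: "'a::real_normed_field"
  assumes "a \<noteq> 0"
  shows "filterlim (\<lambda>z. a * z + b) (at (a * x + b)) (at x)"
  by (intro filterlim_atI tendsto_intros eventually_mono[OF eventually_neq_at_within[of x x UNIV]])
     (use assms in auto)

lemma conformally_conjugateI:
  assumes "a \<noteq> 0" "\<forall>\<^sub>\<approx>z. N z = G z" "\<And>z. G (a * z + b) = a * M z + b"
  shows "conformally_conjugate N M"
  unfolding conformally_conjugate_def
proof (intro exI conjI)
  show "\<forall>\<^sub>\<approx>z. N (a * z + b) = a * M z + b"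
    using eventually_cosparse_compose[OF filterlim_affine_at[OF assms(1), of b] assms(2)]
    by (simp add: assms(3))
qed (fact assms(1))

lemma newton_map_R1_mobius_logderiv:
  fixes F :: "complex \<Rightarrow> complex"
  assumes N: "\<forall>\<^sub>\<approx>z. newton_map F z = R1_mobius_map a b w0 z"
    and b: "b \<noteq> 0" and z1: "exp_2pii z1 = - a / b"
  shows "\<forall>\<^sub>F z in at z1. F z \<noteq> 0 \<and>
    (z - z1) * deriv F z / F z = - (exp_2pii z - w0) / b * ((z - z1) / (exp_2pii z - exp_2pii z1))"
  using eventually_cosparse_imp_eventually_at[OF N UNIV_I]
    eventually_exp_2pii_neq[of w0 z1] eventually_exp_2pii_neq[of "exp_2pii z1" z1]
proof eventually_elim
  case (elim z)
  have num: "a + b * w = b * (w - exp_2pii z1)" for w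
    using z1 b by (simp add: field_simps)
  have "F z / deriv F z = z - newton_map F z"
    by (simp add: newton_map_def)
  also have "\<dots> = - (b * (exp_2pii z - exp_2pii z1) / (exp_2pii z - w0))"
    using elim(1) by (simp add: R1_mobius_map_def num)
  finally have quot: "F z / deriv F z = - (b * (exp_2pii z - exp_2pii z1) / (exp_2pii z - w0))" .
  then have "F z \<noteq> 0"
    using elim(2,3) b by auto
  moreover have "(z - z1) * deriv F z / F z = (z - z1) * inverse (F z / deriv F z)"
    by simp
  ultimately show ?case
    unfolding quot using elim(2,3) b by (simp add: field_simps)
qed

lemma newton_map_R1_mobius_zorder:
  fixes F :: "complex \<Rightarrow> complex"
  assumes holo: "F holomorphic_on UNIV" and nonzero: "\<exists>w. F w \<noteq> 0"
    and N: "\<forall>\<^sub>\<approx>z. newton_map F z = R1_mobius_map a b w0 z"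
    and b: "b \<noteq> 0" and nz: "a + b * w0 \<noteq> 0" and z1: "exp_2pii z1 = - a / b"
  shows "zorder F z1 > 0" and "2 * pi * \<i> * a * b * of_int (zorder F z1) = - (a + b * w0)"
proof -
  define w1 where "w1 = exp_2pii z1"
  note ev = newton_map_R1_mobius_logderiv[OF N b z1, folded w1_def]
  have "((\<lambda>z. - (exp_2pii z - w0) / b * ((z - z1) / (exp_2pii z - w1)))
      \<longlongrightarrow> - (w1 - w0) / b * (1 / (2 * pi * \<i> * w1))) (at z1)"
    unfolding w1_def
    by (intro tendsto_mult[OF _ tendsto_exp_2pii_difference_quotient] tendsto_intros) (use b in auto)
  moreover have "\<forall>\<^sub>F z in at z1. - (exp_2pii z - w0) / b * ((z - z1) / (exp_2pii z - w1))
      = (z - z1) * deriv F z / F z"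
    using ev by (rule eventually_mono) simp
  ultimately have "((\<lambda>z. (z - z1) * deriv F z / F z)
      \<longlongrightarrow> - (w1 - w0) / b * (1 / (2 * pi * \<i> * w1))) (at z1)"
    by (rule Lim_transform_eventually)
  moreover have "((\<lambda>z. (z - z1) * deriv F z / F z) \<longlongrightarrow> of_int (zorder F z1)) (at z1)"
    using nonzero by (intro tendsto_logderiv_zorder[OF holo]) auto
  ultimately have Z: "of_int (zorder F z1) = - (w1 - w0) / b * (1 / (2 * pi * \<i> * w1))"
    using tendsto_unique[OF at_neq_bot] by blast
  have "a = - b * w1" "w1 \<noteq> 0"
    using z1 b by (simp_all add: w1_def field_simps)
  then show eq: "2 * pi * \<i> * a * b * of_int (zorder F z1) = - (a + b * w0)"
    unfolding Z using b by (simp add: field_simps)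
  have "F analytic_on {z1}"
    using holo analytic_on_open[of UNIV F] analytic_on_subset by blast
  moreover have "\<exists>\<^sub>F z in at z1. F z \<noteq> 0"
    using ev by (intro eventually_frequently) (auto elim: eventually_mono)
  ultimately have "zorder F z1 \<ge> 0"
    by (rule zorder_ge_0)
  moreover have "zorder F z1 \<noteq> 0"
  proof
    assume "zorder F z1 = 0"
    then have "- (a + b * w0) = 0"
      unfolding eq[symmetric] by simp
    with nz show False
      by (simp only: neg_equal_0_iff_equal)
  qed
  ultimately show "zorder F z1 > 0"
    by simp
qed

lemma R1_mobius_map_conjugate_F_beta_translation:
  assumes N: "\<forall>\<^sub>\<approx>z. N z = R1_mobius_map a 0 w0 z" and "a \<noteq> 0" "w0 \<noteq> 0"
  shows "conformally_conjugate N (newton_map (F_beta (- a / w0)))"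
proof -
  define t where "t = Ln (- w0) / (2 * pi * \<i>)"
  have Et: "exp_2pii t = - w0"
    unfolding t_def using \<open>w0 \<noteq> 0\<close> by (intro exp_2pii_Ln) simp
  have key: "a / (w * (- w0) - w0) = (- a / w0) / (1 + w)" for w
  proof -
    have "w * (- w0) - w0 = - (w0 * (1 + w))"
      by (simp add: algebra_simps)
    then show ?thesis
      by (simp add: divide_divide_eq_left)
  qed
  have "R1_mobius_map a 0 w0 (1 * z + t) = 1 * newton_map (F_beta (- a / w0)) z + t" for z
  proof -
    have "R1_mobius_map a 0 w0 (1 * z + t) = z + t + a / (exp_2pii z * (- w0) - w0)"
      unfolding R1_mobius_map_def mult_1 exp_2pii_add Et by simp
    also have "\<dots> = z + t + (- a / w0) / (1 + exp_2pii z)"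
      by (simp only: key)
    also have "\<dots> = 1 * newton_map (F_beta (- a / w0)) z + t"
      using assms(2,3) by (simp add: newton_map_F_beta)
    finally show ?thesis .
  qed
  then show ?thesis
    by (rule conformally_conjugateI[OF one_neq_zero N])
qed

lemma R1_mobius_map_conjugate_F_beta_reflection:
  assumes N: "\<forall>\<^sub>\<approx>z. N z = R1_mobius_map 0 b w0 z" and "b \<noteq> 0" "w0 \<noteq> 0"
  shows "conformally_conjugate N (newton_map (F_beta (- b)))"
proof -
  define t where "t = Ln (- w0) / (2 * pi * \<i>)"
  have Et: "exp_2pii t = - w0"
    unfolding t_def using \<open>w0 \<noteq> 0\<close> by (intro exp_2pii_Ln) simp
  have key: "b * (- w0 / w) / (- w0 / w - w0) = b / (1 + w)" if "w \<noteq> 0" for w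
  proof -
    have "- w0 / w - w0 = (- w0 / w) * (1 + w)"
      using that by (simp add: field_simps)
    then show ?thesis
      using that \<open>w0 \<noteq> 0\<close> by simp
  qed
  have conj: "R1_mobius_map 0 b w0 ((- 1) * z + t) = (- 1) * newton_map (F_beta (- b)) z + t" for z
  proof -
    have "R1_mobius_map 0 b w0 ((- 1) * z + t)
        = - z + t + b * (- w0 / exp_2pii z) / (- w0 / exp_2pii z - w0)"
      unfolding R1_mobius_map_def mult_minus1 exp_2pii_minus_add Et by simp
    also have "\<dots> = - z + t + b / (1 + exp_2pii z)"
      using key[of "exp_2pii z"] by simp
    also have "\<dots> = (- 1) * newton_map (F_beta (- b)) z + t"
      using assms(2) by (simp add: newton_map_F_beta)
    finally show ?thesis .
  qed
  have "(- 1 :: complex) \<noteq> 0"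
    by simp
  from conformally_conjugateI[OF this N conj] show ?thesis .
qed

lemma R1_mobius_map_conjugate_F_beta:
  assumes N: "\<forall>\<^sub>\<approx>z. N z = R1_mobius_map a b w0 z"
    and "w0 \<noteq> 0" "a + b * w0 \<noteq> 0" "a = 0 \<or> b = 0"
  obtains \<beta> where "\<beta> \<noteq> 0" "conformally_conjugate N (newton_map (F_beta \<beta>))"
proof (cases "b = 0")
  case True
  with assms(3) have "a \<noteq> 0"
    by simp
  from N have "\<forall>\<^sub>\<approx>z. N z = R1_mobius_map a 0 w0 z"
    unfolding True .
  then have "conformally_conjugate N (newton_map (F_beta (- a / w0)))"
    using \<open>a \<noteq> 0\<close> \<open>w0 \<noteq> 0\<close> by (rule R1_mobius_map_conjugate_F_beta_translation)
  moreover have "- a / w0 \<noteq> 0"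
    using \<open>a \<noteq> 0\<close> \<open>w0 \<noteq> 0\<close> by simp
  ultimately show ?thesis
    using that by blast
next
  case False
  with assms(4) have "a = 0"
    by simp
  from N have "\<forall>\<^sub>\<approx>z. N z = R1_mobius_map 0 b w0 z"
    unfolding \<open>a = 0\<close> .
  then have "conformally_conjugate N (newton_map (F_beta (- b)))"
    using False \<open>w0 \<noteq> 0\<close> by (rule R1_mobius_map_conjugate_F_beta_reflection)
  moreover have "- b \<noteq> 0"
    using False by simp
  ultimately show ?thesis
    using that by blast
qed

lemma R1_mobius_map_translate_eq_newton_map_F_alpha_m:
  assumes "a \<noteq> 0" "b \<noteq> 0" "m \<ge> 1"
    and m: "2 * pi * \<i> * a * b * of_nat m = - (a + b * w0)"
    and t: "exp_2pii t = - a / b"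
  shows "R1_mobius_map a b w0 (z + t)
    = newton_map (F_alpha_m (- 1 / (of_nat m * b) - pi * \<i>) m) z + t"
proof -
  define \<alpha> where "\<alpha> = - 1 / (of_nat m * b) - pi * \<i>"
  have den: "of_nat m * ((\<alpha> + pi * \<i>) * w + (pi * \<i> - \<alpha>)) = - (a * w + b * w0) / (a * b)" for w
  proof -
    have "of_nat m * ((\<alpha> + pi * \<i>) * w + (pi * \<i> - \<alpha>)) = - w / b + 1 / b + 2 * pi * \<i> * of_nat m"
      using \<open>m \<ge> 1\<close> \<open>b \<noteq> 0\<close> by (simp add: \<alpha>_def field_simps)
    also have "2 * pi * \<i> * of_nat m = - (a + b * w0) / (a * b)"
      using m \<open>a \<noteq> 0\<close> \<open>b \<noteq> 0\<close> by (simp add: field_simps)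
    finally show ?thesis
      using \<open>a \<noteq> 0\<close> \<open>b \<noteq> 0\<close> by (simp add: field_simps)
  qed
  have num: "a + b * (w * (- a / b)) = a * (1 - w)"
    and den': "w * (- a / b) - w0 = - (a * w + b * w0) / b" for w
    using \<open>b \<noteq> 0\<close> by (simp_all add: field_simps)
  have "a * (1 - w) * b = - ((w - 1) * (a * b))" for w
    by (simp add: algebra_simps)
  then have "(a + b * (w * (- a / b))) / (w * (- a / b) - w0)
      = - ((w - 1) / (- (a * w + b * w0) / (a * b)))" for w
    unfolding num den' by (simp only: divide_divide_eq_right minus_divide_left)
  then show ?thesis
    unfolding R1_mobius_map_def exp_2pii_add t newton_map_F_alpha_m[OF \<open>m \<ge> 1\<close>]
      den[unfolded \<alpha>_def] by simp
qed

lemma R1_mobius_map_conjugate_F_alpha_m: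
  assumes N: "\<forall>\<^sub>\<approx>z. N z = R1_mobius_map a b w0 z"
    and "a \<noteq> 0" "b \<noteq> 0" "w0 \<noteq> 0" "m \<ge> 1"
    and m: "2 * pi * \<i> * a * b * of_nat m = - (a + b * w0)"
  obtains \<alpha> where "\<alpha> \<noteq> pi * \<i>" "\<alpha> \<noteq> - (pi * \<i>)"
    "conformally_conjugate N (newton_map (F_alpha_m \<alpha> m))"
proof
  define \<alpha> where "\<alpha> = - 1 / (of_nat m * b) - pi * \<i>"
  show "\<alpha> \<noteq> - (pi * \<i>)"
    using \<open>m \<ge> 1\<close> \<open>b \<noteq> 0\<close> by (simp add: \<alpha>_def)
  show "\<alpha> \<noteq> pi * \<i>"
  proof
    assume "\<alpha> = pi * \<i>"
    then have "2 * pi * \<i> * of_nat m * b = - 1"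
      using \<open>m \<ge> 1\<close> \<open>b \<noteq> 0\<close> by (simp add: \<alpha>_def field_simps)
    moreover have "- (a + b * w0) = a * (2 * pi * \<i> * of_nat m * b)"
      unfolding m[symmetric] by (simp add: mult_ac)
    ultimately have "b * w0 = 0"
      by simp
    then show False
      using \<open>b \<noteq> 0\<close> \<open>w0 \<noteq> 0\<close> by simp
  qed
  define t where "t = Ln (- a / b) / (2 * pi * \<i>)"
  have "exp_2pii t = - a / b"
    unfolding t_def using assms(2,3) by (intro exp_2pii_Ln) simp
  then have "R1_mobius_map a b w0 (1 * z + t) = 1 * newton_map (F_alpha_m \<alpha> m) z + t" for z
    unfolding \<alpha>_def using R1_mobius_map_translate_eq_newton_map_F_alpha_m[OF assms(2,3,5) m] by simp
  then show "conformally_conjugate N (newton_map (F_alpha_m \<alpha> m))"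
    by (rule conformally_conjugateI[OF one_neq_zero N])
qed

lemma newton_map_R1_mobius_conjugate_F_alpha_m:
  fixes F :: "complex \<Rightarrow> complex"
  assumes holo: "F holomorphic_on UNIV" and nonzero: "\<exists>w. F w \<noteq> 0"
    and N: "\<forall>\<^sub>\<approx>z. newton_map F z = R1_mobius_map a b w0 z"
    and "a \<noteq> 0" "b \<noteq> 0" "w0 \<noteq> 0" "a + b * w0 \<noteq> 0"
  obtains \<alpha> m where "\<alpha> \<noteq> pi * \<i>" "\<alpha> \<noteq> - (pi * \<i>)" "m \<ge> 1"
    "conformally_conjugate (newton_map F) (newton_map (F_alpha_m \<alpha> m))"
proof -
  define z1 where "z1 = Ln (- a / b) / (2 * pi * \<i>)"
  have "exp_2pii z1 = - a / b"
    unfolding z1_def using assms(4,5) by (intro exp_2pii_Ln) simp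
  note zorder = newton_map_R1_mobius_zorder[OF holo nonzero N assms(5,7) this]
  define m where "m = nat (zorder F z1)"
  have "m \<ge> 1" "2 * pi * \<i> * a * b * of_nat m = - (a + b * w0)"
    using zorder by (simp_all add: m_def)
  with R1_mobius_map_conjugate_F_alpha_m[OF N assms(4-6)] that show ?thesis
    by metis
qed

theorem proposition5p3:
  fixes F :: "complex \<Rightarrow> complex"
  assumes "transcendental_entire F"
    and "class_R1 (newton_map F)"
    and "\<exists>!z0. z0 \<in> strip_S0 \<and> is_pole (newton_map F) z0"
    and "\<forall>z0 \<in> strip_S0. is_pole (newton_map F) z0 \<longrightarrow> zorder (newton_map F) z0 = -1"
  shows "(\<exists>\<alpha> m. \<alpha> \<noteq> pi * \<i> \<and> \<alpha> \<noteq> - (pi * \<i>) \<and> m \<ge> 1 \<and>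
            conformally_conjugate (newton_map F) (newton_map (F_alpha_m \<alpha> m)))
       \<or> (\<exists>\<beta>. \<beta> \<noteq> 0 \<and> conformally_conjugate (newton_map F) (newton_map (F_beta \<beta>)))"
proof -
  have holo: "F holomorphic_on UNIV" and nonzero: "\<exists>w. F w \<noteq> 0"
    using assms(1) unfolding transcendental_entire_def by (metis poly_0)+
  obtain a b w0 where w0: "w0 \<noteq> 0" and nz: "a + b * w0 \<noteq> 0"
    and N: "\<forall>\<^sub>\<approx>z. newton_map F z = R1_mobius_map a b w0 z"
    using class_R1_unique_simple_pole_normal_form[OF assms(2-4)] by blast
  show ?thesis
  proof (cases "a = 0 \<or> b = 0")
    case True
    with R1_mobius_map_conjugate_F_beta[OF N w0 nz] show ?thesis
      by blast
  next
    case False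
    with newton_map_R1_mobius_conjugate_F_alpha_m[OF holo nonzero N _ _ w0 nz] show ?thesis
      by blast
  qed
qed

end
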